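(* Let $\Pi$ be a VIC program and let $S_1,S_2$ be states of $\Pi$ that differ only in the choice of player $p$ (i.e. $S_1(p')=S_2(p')$ for $p'\neq p$ and $S_1(p)\neq S_2(p)$). Then for every player $\hat p$: (1) $u(S_1,\hat p,S_1(p))\ge u(S_2,\hat p,S_1(p))$; (2) $u(S_1,\hat p,S_2(p))\le u(S_2,\hat p,S_2(p))$; (3) for every $j\in Q\setminus\{S_1(p),S_2(p)\}$, $u(S_1,\hat p,j)=u(S_2,\hat p,j)$.
   Context: A cGAP $\Pi$ is a finite set of annotated rules $A_0:f(\mu_1,\dots,\mu_n)\leftarrow A_1:\mu_1,\dots,A_n:\mu_n$ (annotation functions $f$ fixed maps $[0,1]^n\to[0,1]$; atoms built from unary vertex and binary edge predicates over vertex constants) plus exactly one vertex choice (VC) rule $b_1(X),\dots,b_m(X)\hookleftarrow a_1(X),\dots,a_m(X)$. $\mathcal{MM}(P)$ denotes the unique minimal model (interpretations map ground atoms to $[0,1]$, ordered pointwise) of a GAP $P$. Each vertex $v$ is a player $\mathcal P_v$ with actions $Q=\{1,\dots,m\}$; a state is a map $S$ from players to $Q$; $\Pi_S$ is the ground GAP obtained from the grounding of $\Pi$ by replacing each ground VC-rule instance for vertex $v$ with $b_i(v):\mu\leftarrow a_i(v):\mu$ where $i=S(\mathcal P_v)$ and keeping all ground non-VC rules. The utility is $u(S,\mathcal P_v,i)=\mathcal{MM}(\Pi_S)(a_i(v))$. Dependency graph $\mathcal G(\Pi)$: vertices are the vertex predicate symbols; there is an edge $(p_2,p_1)$ iff $p_2$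 occurs in the body and $p_1$ in the head of some annotated rule, or $p_2=a_i$ and $p_1=b_i$ for some $i$ in the VC rule. $\Pi$ is a vertex independent choice (VIC) program iff (1) no predicate $b_j$ of the VC-rule head appears in the head of an annotated rule, and (2) for all $i\neq j$ there is no path in $\mathcal G(\Pi)$ from $b_j$ to $a_i$. *)

theory Defs
  imports Main "HOL.Real"
begin

datatype ('x, 'c) trm = Var 'x | Cst 'c

fun inst :: "('x \<Rightarrow> 'c) \<Rightarrow> ('x, 'c) trm \<Rightarrow> 'c" where
  "inst \<sigma> (Var x) = \<sigma> x"
| "inst \<sigma> (Cst c) = c"

datatype ('p, 'e, 't) atom = VAt 'p 't | EAt 'e 't 't

text \<open>An annotated rule  A0 : f(mu_1,...,mu_n) <- A1 : mu_1, ..., An : mu_n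
  is represented as (A0, f, [A1,...,An]).\<close>
type_synonym ('p, 'e, 't) arule = "('p, 'e, 't) atom \<times> (real list \<Rightarrow> real) \<times> ('p, 'e, 't) atom list"

text \<open>A cGAP: a set of annotated rules and one vertex choice rule
  b_1(X),...,b_m(X) <-' a_1(X),...,a_m(X)  given by m, a, b (indices 1..m).\<close>
record ('p, 'e, 'x, 'c) cgap =
  rules :: "('p, 'e, ('x, 'c) trm) arule set"
  nch :: nat
  ca :: "nat \<Rightarrow> 'p"
  cb :: "nat \<Rightarrow> 'p"

definition actions :: "('p, 'e, 'x, 'c) cgap \<Rightarrow> nat set" where
  "actions \<Pi> = {1..nch \<Pi>}"

definition is_cgap :: "('p, 'e, 'x, 'c) cgap \<Rightarrow> bool" where
  "is_cgap \<Pi> \<longleftrightarrow>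
     finite (UNIV :: 'c set) \<and>
     finite (rules \<Pi>) \<and> nch \<Pi> \<ge> 1 \<and>
     (\<forall>(h, f, bs) \<in> rules \<Pi>. \<forall>\<mu>s. length \<mu>s = length bs \<and> (\<forall>x\<in>set \<mu>s. 0 \<le> x \<and> x \<le> 1)
          \<longrightarrow> 0 \<le> f \<mu>s \<and> f \<mu>s \<le> 1) \<and>
     (\<forall>(h, f, bs) \<in> rules \<Pi>. (\<exists>e s t. h = EAt e s t) \<longrightarrow> bs = [])"

definition ground_atom :: "('x \<Rightarrow> 'c) \<Rightarrow> ('p, 'e, ('x, 'c) trm) atom \<Rightarrow> ('p, 'e, 'c) atom" where
  "ground_atom \<sigma> = map_atom id id (inst \<sigma>)"

definition ground_rule :: "('x \<Rightarrow> 'c) \<Rightarrow> ('p, 'e, ('x, 'c) trm) arule \<Rightarrow> ('p, 'e, 'c) arule" where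
  "ground_rule \<sigma> r = (case r of (h, f, bs) \<Rightarrow> (ground_atom \<sigma> h, f, map (ground_atom \<sigma>) bs))"

definition grounding :: "('p, 'e, 'x, 'c) cgap \<Rightarrow> ('p, 'e, 'c) arule set" where
  "grounding \<Pi> = {ground_rule \<sigma> r | \<sigma> r. r \<in> rules \<Pi>}"

definition prog_S :: "('p, 'e, 'x, 'c) cgap \<Rightarrow> ('c \<Rightarrow> nat) \<Rightarrow> ('p, 'e, 'c) arule set" where
  "prog_S \<Pi> S = grounding \<Pi> \<union>
     {(VAt (cb \<Pi> (S v)) v, (\<lambda>\<mu>s. hd \<mu>s), [VAt (ca \<Pi> (S v)) v]) | v. True}"

definition interp :: "(('p, 'e, 'c) atom \<Rightarrow> real) \<Rightarrow> bool" where
  "interp I \<longleftrightarrow> (\<forall>A. 0 \<le> I A \<and> I A \<le> 1)"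

definition sat_rule :: "(('p, 'e, 'c) atom \<Rightarrow> real) \<Rightarrow> ('p, 'e, 'c) arule \<Rightarrow> bool" where
  "sat_rule I r = (case r of (h, f, bs) \<Rightarrow>
     (\<forall>\<mu>s. length \<mu>s = length bs \<and>
        (\<forall>k < length bs. 0 \<le> \<mu>s ! k \<and> \<mu>s ! k \<le> 1 \<and> \<mu>s ! k \<le> I (bs ! k))
        \<longrightarrow> f \<mu>s \<le> I h))"

definition is_model :: "('p, 'e, 'c) arule set \<Rightarrow> (('p, 'e, 'c) atom \<Rightarrow> real) \<Rightarrow> bool" where
  "is_model P I \<longleftrightarrow> interp I \<and> (\<forall>r \<in> P. sat_rule I r)"

definition MM :: "('p, 'e, 'c) arule set \<Rightarrow> ('p, 'e, 'c) atom \<Rightarrow> real" where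
  "MM P = (THE I. is_model P I \<and> (\<forall>J. is_model P J \<longrightarrow> I \<le> J))"

definition is_state :: "('p, 'e, 'x, 'c) cgap \<Rightarrow> ('c \<Rightarrow> nat) \<Rightarrow> bool" where
  "is_state \<Pi> S \<longleftrightarrow> (\<forall>v. S v \<in> actions \<Pi>)"

definition utility :: "('p, 'e, 'x, 'c) cgap \<Rightarrow> ('c \<Rightarrow> nat) \<Rightarrow> 'c \<Rightarrow> nat \<Rightarrow> real" where
  "utility \<Pi> S v i = MM (prog_S \<Pi> S) (VAt (ca \<Pi> i) v)"

definition dep_graph :: "('p, 'e, 'x, 'c) cgap \<Rightarrow> ('p \<times> 'p) set" where
  "dep_graph \<Pi> =
     {(p2, p1). \<exists>(h, f, bs) \<in> rules \<Pi>. (\<exists>t. h = VAt p1 t) \<and> (\<exists>t. VAt p2 t \<in> set bs)}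
   \<union> {(ca \<Pi> i, cb \<Pi> i) | i. i \<in> actions \<Pi>}"

definition is_vic :: "('p, 'e, 'x, 'c) cgap \<Rightarrow> bool" where
  "is_vic \<Pi> \<longleftrightarrow>
     (\<forall>j \<in> actions \<Pi>. \<forall>(h, f, bs) \<in> rules \<Pi>. \<forall>t. h \<noteq> VAt (cb \<Pi> j) t) \<and>
     (\<forall>i \<in> actions \<Pi>. \<forall>j \<in> actions \<Pi>. i \<noteq> j \<longrightarrow> (cb \<Pi> j, ca \<Pi> i) \<notin> (dep_graph \<Pi>)\<^sup>*)"

end

theory Submission imports Defs begin

(* Write the ground program of a state S as
     Pi_S = Pi_S^{-p} \<union> {vc(S,p)},
   where Pi_S^{-p} consists of the grounding of the annotated rules and the
   vertex-choice rules of all players other than p, and vc(S,p) is the rule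
   b_{S p}(p) <- a_{S p}(p) of player p.  If S1 and S2 differ only at p, then
   Pi_S1^{-p} = Pi_S2^{-p} =: C.
   (i)  Minimal models are monotone in the program, so MM C \<le> MM Pi_Si.
   (ii) Atoms whose predicate is not reachable from b_{S p} in the dependency
        graph form a region closed under rule bodies that vc(S,p) cannot
        write to; on such atoms MM Pi_S and MM C agree.  By the VIC condition
        every a_j with j \<noteq> S p lies in that region.
   Hence u(S_i, ., j) = MM C (a_j) for j \<noteq> S_i p, and u(S_i, ., S_i p) \<ge> MM C,
   which gives all three claims. *)

text \<open>A ground program is bounded if every annotation function maps inputs
  in [0,1] to values at most 1; this guarantees that models exist.\<close>
definition bounded_prog :: "('p, 'e, 'c) arule set \<Rightarrow> bool" where
  "bounded_prog P \<longleftrightarrow>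
     (\<forall>(h, f, bs) \<in> P. \<forall>\<mu>s. length \<mu>s = length bs \<and> (\<forall>x\<in>set \<mu>s. 0 \<le> x \<and> x \<le> 1) \<longrightarrow> f \<mu>s \<le> 1)"

lemma bounded_prog_subset: "bounded_prog P \<Longrightarrow> C \<subseteq> P \<Longrightarrow> bounded_prog C"
  unfolding bounded_prog_def by blast

lemma sat_rule_mono:
  assumes "sat_rule I (h, f, bs)"
    and "\<forall>k < length bs. J (bs ! k) \<le> I (bs ! k)" and "I h \<le> J h"
  shows "sat_rule J (h, f, bs)"
proof -
  have "f \<mu>s \<le> J h"
    if \<mu>s: "length \<mu>s = length bs"
      "\<forall>k < length bs. 0 \<le> \<mu>s ! k \<and> \<mu>s ! k \<le> 1 \<and> \<mu>s ! k \<le> J (bs ! k)" for \<mu>s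
  proof -
    have "\<forall>k < length bs. 0 \<le> \<mu>s ! k \<and> \<mu>s ! k \<le> 1 \<and> \<mu>s ! k \<le> I (bs ! k)"
      using \<mu>s(2) assms(2) by (meson order_trans)
    then have "f \<mu>s \<le> I h" using assms(1) \<mu>s(1) unfolding sat_rule_def by simp
    then show ?thesis using assms(3) by simp
  qed
  then show ?thesis unfolding sat_rule_def by simp
qed

lemma top_is_model:
  assumes "bounded_prog P"
  shows "is_model P (\<lambda>_. 1)"
  unfolding is_model_def interp_def
proof (intro conjI allI ballI)
  fix r assume r: "r \<in> P"
  obtain h f bs where r_eq: "r = (h, f, bs)" by (cases r) auto
  have bound: "f \<mu>s \<le> 1" if "length \<mu>s = length bs" "\<forall>x\<in>set \<mu>s. 0 \<le> x \<and> x \<le> 1" for \<mu>s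
    using assms r r_eq that unfolding bounded_prog_def by auto
  show "sat_rule (\<lambda>_. 1) r"
    unfolding r_eq sat_rule_def by (simp add: bound all_set_conv_all_nth)
qed simp_all

lemma Inf_models_is_least_model:
  assumes ex: "is_model P M"
  defines "L \<equiv> \<lambda>A. INF J \<in> {J. is_model P J}. J A"
  shows "is_model P L" and "\<And>J. is_model P J \<Longrightarrow> L \<le> J"
proof -
  have bdd: "bdd_below ((\<lambda>J. J A) ` {J. is_model P J})" for A
    by (rule bdd_belowI[of _ 0]) (auto simp: is_model_def interp_def)
  have lower: "L A \<le> J A" if "is_model P J" for A J
    unfolding L_def by (rule cInf_lower) (use that bdd in auto)
  have greatest: "c \<le> L A" if "\<And>J. is_model P J \<Longrightarrow> c \<le> J A" for c A
    unfolding L_def by (rule cInf_greatest) (use that ex in auto)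
  show "L \<le> J" if "is_model P J" for J
    using lower that by (auto simp: le_fun_def)
  have "interp L"
    unfolding interp_def
    using greatest[of 0] lower[OF ex] ex by (auto simp: is_model_def interp_def intro: order_trans)
  moreover have "sat_rule L r" if r: "r \<in> P" for r
  proof -
    obtain h f bs where r_eq: "r = (h, f, bs)" by (cases r) auto
    have "f \<mu>s \<le> L h"
      if \<mu>s: "length \<mu>s = length bs"
        "\<forall>k < length bs. 0 \<le> \<mu>s ! k \<and> \<mu>s ! k \<le> 1 \<and> \<mu>s ! k \<le> L (bs ! k)" for \<mu>s
    proof (rule greatest)
      fix J assume J: "is_model P J"
      then have "sat_rule J (h, f, bs)" using r r_eq by (auto simp: is_model_def)
      moreover have "\<forall>k < length bs. \<mu>s ! k \<le> J (bs ! k)"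
        using \<mu>s lower[OF J] by (meson order_trans)
      ultimately show "f \<mu>s \<le> J h" using \<mu>s unfolding sat_rule_def by auto
    qed
    then show ?thesis unfolding r_eq sat_rule_def by auto
  qed
  ultimately show "is_model P L" unfolding is_model_def by blast
qed

lemma MM_least_model:
  assumes "bounded_prog P"
  shows "is_model P (MM P)" and "\<And>J. is_model P J \<Longrightarrow> MM P \<le> J"
proof -
  define L where "L = (\<lambda>A. INF J \<in> {J. is_model P J}. J A)"
  note least = Inf_models_is_least_model[OF top_is_model[OF assms], folded L_def]
  have "MM P = L"
    unfolding MM_def by (rule the_equality) (use least in \<open>auto intro: antisym\<close>)
  then show "is_model P (MM P)" and "\<And>J. is_model P J \<Longrightarrow> MM P \<le> J"
    using least by auto
qed

lemma MM_mono:
  assumes "bounded_prog P" and "C \<subseteq> P"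
  shows "MM C \<le> MM P"
proof -
  have "is_model C (MM P)"
    using MM_least_model(1)[OF assms(1)] assms(2) unfolding is_model_def by blast
  then show ?thesis
    using MM_least_model(2)[OF bounded_prog_subset[OF assms]] by blast
qed

text \<open>If the rules of P outside C have no head in U, then P and C
  have the same least model on U.  (The proof patches MM P with MM C on U and
  checks that the result is still a model of P.)\<close>
lemma MM_local:
  assumes bounded: "bounded_prog P" and sub: "C \<subseteq> P"
    and heads_outside: "\<forall>(h, f, bs) \<in> P - C. \<not> U h"
    and closed: "\<forall>(h, f, bs) \<in> P. U h \<longrightarrow> (\<forall>b\<in>set bs. U b)"
    and "U A"
  shows "MM P A = MM C A"
proof -
  have bounded_C: "bounded_prog C" using bounded_prog_subset[OF bounded sub] .
  note model_P = MM_least_model[OF bounded] and model_C = MM_least_model[OF bounded_C]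
  have le: "MM C \<le> MM P" using MM_mono[OF bounded sub] .
  define J where "J = (\<lambda>A. if U A then MM C A else MM P A)"
  have "sat_rule J r" if r: "r \<in> P" for r
  proof -
    obtain h f bs where r_eq: "r = (h, f, bs)" by (cases r) auto
    show ?thesis
    proof (cases "U h")
      case True
      then have "r \<in> C" using heads_outside r r_eq by blast
      then have "sat_rule (MM C) (h, f, bs)"
        using model_C(1) r_eq unfolding is_model_def by blast
      moreover have "\<forall>k < length bs. J (bs ! k) \<le> MM C (bs ! k)"
      proof -
        have "\<forall>b\<in>set bs. U b" using closed r r_eq True by blast
        then show ?thesis unfolding J_def using nth_mem by fastforce
      qed
      moreover have "MM C h \<le> J h" unfolding J_def using True by simp
      ultimately show ?thesis unfolding r_eq by (rule sat_rule_mono)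
    next
      case False
      have "sat_rule (MM P) (h, f, bs)" using model_P(1) r r_eq unfolding is_model_def by blast
      moreover have "\<forall>k < length bs. J (bs ! k) \<le> MM P (bs ! k)"
        unfolding J_def using le unfolding le_fun_def by simp
      moreover have "MM P h \<le> J h" unfolding J_def using False by simp
      ultimately show ?thesis unfolding r_eq by (rule sat_rule_mono)
    qed
  qed
  moreover have "interp J"
    using model_P(1) model_C(1) unfolding J_def is_model_def interp_def by simp
  ultimately have "MM P \<le> J" using model_P(2) unfolding is_model_def by blast
  then have "MM P A \<le> MM C A" using \<open>U A\<close> unfolding le_fun_def J_def by metis
  moreover have "MM C A \<le> MM P A" using le unfolding le_fun_def by blast
  ultimately show ?thesis by simp
qed

definition vc_rule :: "('p, 'e, 'x, 'c) cgap \<Rightarrow> ('c \<Rightarrow> nat) \<Rightarrow> 'c \<Rightarrow> ('p, 'e, 'c) arule" where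
  "vc_rule \<Pi> S v = (VAt (cb \<Pi> (S v)) v, (\<lambda>\<mu>s. hd \<mu>s), [VAt (ca \<Pi> (S v)) v])"

definition prog_without :: "('p, 'e, 'x, 'c) cgap \<Rightarrow> ('c \<Rightarrow> nat) \<Rightarrow> 'c \<Rightarrow> ('p, 'e, 'c) arule set" where
  "prog_without \<Pi> S p = grounding \<Pi> \<union> vc_rule \<Pi> S ` (- {p})"

lemma prog_S_vc_rule: "prog_S \<Pi> S = grounding \<Pi> \<union> range (vc_rule \<Pi> S)"
  unfolding prog_S_def vc_rule_def by blast

lemma prog_S_split: "prog_S \<Pi> S = prog_without \<Pi> S p \<union> {vc_rule \<Pi> S p}"
  unfolding prog_S_vc_rule prog_without_def by blast

lemma prog_without_cong:
  assumes "\<forall>v. v \<noteq> p \<longrightarrow> S1 v = S2 v"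
  shows "prog_without \<Pi> S1 p = prog_without \<Pi> S2 p"
proof -
  have "vc_rule \<Pi> S1 v = vc_rule \<Pi> S2 v" if "v \<noteq> p" for v
    using assms that by (simp add: vc_rule_def)
  then show ?thesis unfolding prog_without_def by (auto intro!: image_cong)
qed

lemma ground_atom_simps [simp]:
  "ground_atom \<sigma> (VAt q t) = VAt q (inst \<sigma> t)"
  "ground_atom \<sigma> (EAt e s t) = EAt e (inst \<sigma> s) (inst \<sigma> t)"
  by (simp_all add: ground_atom_def)

lemma groundingE:
  assumes "(h, f, bs) \<in> grounding \<Pi>"
  obtains \<sigma> h0 bs0 where "(h0, f, bs0) \<in> rules \<Pi>"
    and "h = ground_atom \<sigma> h0" and "bs = map (ground_atom \<sigma>) bs0"
  using assms unfolding grounding_def ground_rule_def by (auto split: prod.splits)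

lemma bounded_prog_S:
  assumes "is_cgap \<Pi>"
  shows "bounded_prog (prog_S \<Pi> S)"
  unfolding bounded_prog_def
proof (intro ballI)
  fix r assume r: "r \<in> prog_S \<Pi> S"
  obtain h f bs where r_eq: "r = (h, f, bs)" by (cases r) auto
  have "f \<mu>s \<le> 1" if "length \<mu>s = length bs" "\<forall>x\<in>set \<mu>s. 0 \<le> x \<and> x \<le> 1" for \<mu>s
  proof (cases "r \<in> grounding \<Pi>")
    case True
    then obtain \<sigma> h0 bs0 where "(h0, f, bs0) \<in> rules \<Pi>" "bs = map (ground_atom \<sigma>) bs0"
      using r_eq groundingE by metis
    moreover have "\<forall>\<mu>s. length \<mu>s = length bs0 \<and> (\<forall>x\<in>set \<mu>s. 0 \<le> x \<and> x \<le> 1)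
        \<longrightarrow> 0 \<le> f \<mu>s \<and> f \<mu>s \<le> 1"
      using assms calculation(1) unfolding is_cgap_def by fast
    ultimately show ?thesis using that by simp
  next
    case False
    then obtain v where "r = vc_rule \<Pi> S v" using r prog_S_vc_rule by blast
    then show ?thesis using that r_eq by (auto simp: vc_rule_def length_Suc_conv)
  qed
  then show "case r of (h, f, bs) \<Rightarrow>
      \<forall>\<mu>s. length \<mu>s = length bs \<and> (\<forall>x\<in>set \<mu>s. 0 \<le> x \<and> x \<le> 1) \<longrightarrow> f \<mu>s \<le> 1"
    using r_eq by simp
qed

definition unaffected :: "('p, 'e, 'x, 'c) cgap \<Rightarrow> nat \<Rightarrow> ('p, 'e, 'c) atom \<Rightarrow> bool" where
  "unaffected \<Pi> k A \<longleftrightarrow> (\<forall>q v. A = VAt q v \<longrightarrow> (cb \<Pi> k, q) \<notin> (dep_graph \<Pi>)\<^sup>*)"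

text \<open>Unaffected atoms are closed under passing from a rule head to its body:
  every rule of the ground program induces edges of the dependency graph.\<close>
lemma unaffected_closed:
  assumes cgap: "is_cgap \<Pi>" and state: "is_state \<Pi> S"
  shows "\<forall>(h, f, bs) \<in> prog_S \<Pi> S. unaffected \<Pi> k h \<longrightarrow> (\<forall>b\<in>set bs. unaffected \<Pi> k b)"
proof (intro ballI)
  fix r assume r: "r \<in> prog_S \<Pi> S"
  obtain h f bs where r_eq: "r = (h, f, bs)" by (cases r) auto
  have edge_back: "(cb \<Pi> k, q') \<notin> (dep_graph \<Pi>)\<^sup>*"
    if "(q', q) \<in> dep_graph \<Pi>" "(cb \<Pi> k, q) \<notin> (dep_graph \<Pi>)\<^sup>*" for q q'
    using that rtrancl_into_rtrancl by metis
  have "unaffected \<Pi> k b" if head: "unaffected \<Pi> k h" and b: "b \<in> set bs" for b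
  proof (cases "r \<in> grounding \<Pi>")
    case True
    then obtain \<sigma> h0 bs0 where r0: "(h0, f, bs0) \<in> rules \<Pi>"
      "h = ground_atom \<sigma> h0" "bs = map (ground_atom \<sigma>) bs0"
      using r_eq groundingE by metis
    obtain b0 where b0: "b0 \<in> set bs0" "b = ground_atom \<sigma> b0" using b r0(3) by auto
    show ?thesis
    proof (cases h0)
      case (VAt q t)
      show ?thesis
      proof (cases b0)
        case (VAt q' t')
        have "(q', q) \<in> dep_graph \<Pi>"
          unfolding dep_graph_def using r0(1) b0(1) \<open>h0 = VAt q t\<close> VAt by fast
        moreover have "(cb \<Pi> k, q) \<notin> (dep_graph \<Pi>)\<^sup>*"
          using head r0(2) \<open>h0 = VAt q t\<close> by (simp add: unaffected_def)
        ultimately have "(cb \<Pi> k, q') \<notin> (dep_graph \<Pi>)\<^sup>*" by (rule edge_back)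
        then show ?thesis using b0(2) VAt by (simp add: unaffected_def)
      qed (use b0(2) in \<open>simp add: unaffected_def\<close>)
    next
      case (EAt e s t)
      then have "bs0 = []" using cgap r0(1) unfolding is_cgap_def by fast
      then show ?thesis using b0 by simp
    qed
  next
    case False
    then obtain v where "r = vc_rule \<Pi> S v" using r prog_S_vc_rule by blast
    then have hb: "h = VAt (cb \<Pi> (S v)) v" "bs = [VAt (ca \<Pi> (S v)) v]"
      using r_eq by (auto simp: vc_rule_def)
    have "(ca \<Pi> (S v), cb \<Pi> (S v)) \<in> dep_graph \<Pi>"
      using state unfolding dep_graph_def is_state_def by blast
    moreover have "(cb \<Pi> k, cb \<Pi> (S v)) \<notin> (dep_graph \<Pi>)\<^sup>*"
      using head hb by (simp add: unaffected_def)
    ultimately have "(cb \<Pi> k, ca \<Pi> (S v)) \<notin> (dep_graph \<Pi>)\<^sup>*" by (rule edge_back)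
    then show ?thesis using b hb by (simp add: unaffected_def)
  qed
  then show "case r of (h, f, bs) \<Rightarrow> unaffected \<Pi> k h \<longrightarrow> (\<forall>b\<in>set bs. unaffected \<Pi> k b)"
    using r_eq by simp
qed

lemma MM_prog_S_unaffected:
  assumes "is_cgap \<Pi>" and "is_state \<Pi> S" and "unaffected \<Pi> (S p) A"
  shows "MM (prog_S \<Pi> S) A = MM (prog_without \<Pi> S p) A"
proof (rule MM_local[where U = "unaffected \<Pi> (S p)"])
  show "bounded_prog (prog_S \<Pi> S)" using bounded_prog_S[OF assms(1)] .
  show "prog_without \<Pi> S p \<subseteq> prog_S \<Pi> S" using prog_S_split[of \<Pi> S p] by blast
  have "prog_S \<Pi> S - prog_without \<Pi> S p \<subseteq> {vc_rule \<Pi> S p}"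
    using prog_S_split[of \<Pi> S p] by blast
  moreover have "\<not> unaffected \<Pi> (S p) (VAt (cb \<Pi> (S p)) p)"
    by (simp add: unaffected_def)
  ultimately show "\<forall>(h, f, bs) \<in> prog_S \<Pi> S - prog_without \<Pi> S p. \<not> unaffected \<Pi> (S p) h"
    by (auto simp: vc_rule_def)
  show "\<forall>(h, f, bs) \<in> prog_S \<Pi> S. unaffected \<Pi> (S p) h \<longrightarrow> (\<forall>b\<in>set bs. unaffected \<Pi> (S p) b)"
    using unaffected_closed[OF assms(1,2)] .
  show "unaffected \<Pi> (S p) A" by fact
qed

lemma utility_other_action:
  assumes "is_cgap \<Pi>" and "is_vic \<Pi>" and state: "is_state \<Pi> S"
    and "j \<in> actions \<Pi>" and "j \<noteq> S p"
  shows "utility \<Pi> S v j = MM (prog_without \<Pi> S p) (VAt (ca \<Pi> j) v)"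
proof -
  have "S p \<in> actions \<Pi>" using state unfolding is_state_def by blast
  then have "(cb \<Pi> (S p), ca \<Pi> j) \<notin> (dep_graph \<Pi>)\<^sup>*"
    using assms(2,4,5) unfolding is_vic_def by blast
  then have "unaffected \<Pi> (S p) (VAt (ca \<Pi> j) v)" by (simp add: unaffected_def)
  then show ?thesis
    unfolding utility_def using MM_prog_S_unaffected[OF assms(1) state] by blast
qed

lemma utility_lower_bound:
  assumes "is_cgap \<Pi>"
  shows "MM (prog_without \<Pi> S p) (VAt (ca \<Pi> j) v) \<le> utility \<Pi> S v j"
  using MM_mono[OF bounded_prog_S[OF assms], of "prog_without \<Pi> S p"] prog_S_split[of \<Pi> S p]
  unfolding utility_def le_fun_def by blast

theorem mainTheorem9:
  fixes \<Pi> :: "('p, 'e, 'x, 'c) cgap" and S1 S2 :: "'c \<Rightarrow> nat" and p :: 'c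
  assumes "is_cgap \<Pi>" and "is_vic \<Pi>"
    and "is_state \<Pi> S1" and "is_state \<Pi> S2"
    and "\<forall>p'. p' \<noteq> p \<longrightarrow> S1 p' = S2 p'" and "S1 p \<noteq> S2 p"
  shows "\<forall>ph. utility \<Pi> S1 ph (S1 p) \<ge> utility \<Pi> S2 ph (S1 p)
            \<and> utility \<Pi> S1 ph (S2 p) \<le> utility \<Pi> S2 ph (S2 p)
            \<and> (\<forall>j \<in> actions \<Pi> - {S1 p, S2 p}. utility \<Pi> S1 ph j = utility \<Pi> S2 ph j)"
proof (intro allI conjI ballI)
  fix ph
  define C where "C = prog_without \<Pi> S1 p"
  have C2: "prog_without \<Pi> S2 p = C" using prog_without_cong[OF assms(5), of \<Pi>] by (simp add: C_def)
  note other1 = utility_other_action[OF assms(1,2,3), of _ p ph, folded C_def]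
  note other2 = utility_other_action[OF assms(1,2,4), of _ p ph, unfolded C2]
  note lower1 = utility_lower_bound[OF assms(1), of S1 p _ ph, folded C_def]
  note lower2 = utility_lower_bound[OF assms(1), of S2 p _ ph, unfolded C2]
  have act1: "S1 p \<in> actions \<Pi>" and act2: "S2 p \<in> actions \<Pi>"
    using assms(3,4) unfolding is_state_def by auto
  show "utility \<Pi> S2 ph (S1 p) \<le> utility \<Pi> S1 ph (S1 p)"
    using other2[OF act1 assms(6)] lower1 by simp
  show "utility \<Pi> S1 ph (S2 p) \<le> utility \<Pi> S2 ph (S2 p)"
    using other1[OF act2 assms(6)[symmetric]] lower2 by simp
  show "utility \<Pi> S1 ph j = utility \<Pi> S2 ph j" if "j \<in> actions \<Pi> - {S1 p, S2 p}" for j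
    using other1 other2 that by simp
qed

end
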